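(* Let $(X,d,\kappa)$ be a complete digital metric space where $d$ is an $\ell_p$ metric for some $1\le p\le\infty$, and let $T:X\to X$ be a weakly uniformly strict digital contraction. Then $T$ has a unique fixed point $z$. Moreover, for every $x\in X$, $\lim_{n\to\infty}T^n(x)=z$.
   Context: A digital metric space is a triple $(X,d,\kappa)$ where $X\subset\mathbb{Z}^n$ for some positive integer $n$, $\kappa$ is an adjacency relation on $X$, and $d$ is a metric on $X$. The $\ell_p$ metric on $\mathbb{Z}^n$ is $d(x,y)=(\sum_i|x_i-y_i|^p)^{1/p}$ for $1\le p<\infty$ and $\max_i|x_i-y_i|$ for $p=\infty$. $T:X\to X$ is a weakly uniformly strict digital contraction if for every $\varepsilon>0$ there exists $\delta>0$ such that for all $x,y\in X$, $\varepsilon\le d(x,y)<\varepsilon+\delta$ implies $d(T(x),T(y))<\varepsilon$. $T^n$ denotes the $n$-fold composition of $T$. *)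

theory Defs
  imports "HOL-Analysis.Analysis"
begin

text \<open>Points of \<int>^n are modelled as vectors int ^ 'n over a finite index type 'n
  (dimension n = CARD('n) \<ge> 1). The exponent p ranges over [1, \<infinity>], modelled as an ereal.\<close>

definition lp_dist :: "ereal \<Rightarrow> int ^ 'n \<Rightarrow> int ^ 'n \<Rightarrow> real" where
  "lp_dist p x y =
     (if p = \<infinity> then Max (range (\<lambda>i. real_of_int \<bar>x $ i - y $ i\<bar>))
      else (\<Sum>i\<in>UNIV. real_of_int \<bar>x $ i - y $ i\<bar> powr real_of_ereal p) powr (1 / real_of_ereal p))"

definition dm_converges :: "('a \<Rightarrow> 'a \<Rightarrow> real) \<Rightarrow> (nat \<Rightarrow> 'a) \<Rightarrow> 'a \<Rightarrow> bool" where
  "dm_converges d s z \<longleftrightarrow> (\<forall>e>0. \<exists>N. \<forall>m\<ge>N. d (s m) z < e)"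

definition dm_cauchy :: "('a \<Rightarrow> 'a \<Rightarrow> real) \<Rightarrow> (nat \<Rightarrow> 'a) \<Rightarrow> bool" where
  "dm_cauchy d s \<longleftrightarrow> (\<forall>e>0. \<exists>N. \<forall>m\<ge>N. \<forall>k\<ge>N. d (s m) (s k) < e)"

definition dm_complete :: "'a set \<Rightarrow> ('a \<Rightarrow> 'a \<Rightarrow> real) \<Rightarrow> bool" where
  "dm_complete X d \<longleftrightarrow>
     (\<forall>s. (\<forall>m. s m \<in> X) \<longrightarrow> dm_cauchy d s \<longrightarrow> (\<exists>z\<in>X. dm_converges d s z))"

definition weakly_uniformly_strict_contraction ::
    "'a set \<Rightarrow> ('a \<Rightarrow> 'a \<Rightarrow> real) \<Rightarrow> ('a \<Rightarrow> 'a) \<Rightarrow> bool" where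
  "weakly_uniformly_strict_contraction X d T \<longleftrightarrow>
     (\<forall>e>0. \<exists>\<delta>>0. \<forall>x\<in>X. \<forall>y\<in>X. e \<le> d x y \<and> d x y < e + \<delta> \<longrightarrow> d (T x) (T y) < e)"

end

theory Submission
  imports Defs
begin

text \<open>Distinct points of \<open>\<int>\<^sup>n\<close> are at \<open>\<ell>\<^sub>p\<close>-distance at least 1, so the space is uniformly
  discrete. Along an orbit without a fixed point the distances between consecutive iterates are
  then bounded below by 1, hence have a positive infimum \<open>L\<close>; applying the contraction
  condition at scale \<open>\<epsilon> = L\<close> to a step whose distance lies in \<open>[L, L + \<delta>)\<close> pushes the next
  distance below \<open>L\<close>, which is absurd. So every orbit reaches a fixed point after finitely many
  steps, and since the contraction strictly decreases positive distances that fixed point is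
  unique.\<close>

lemma lp_dist_self: "lp_dist p x x = 0"
  by (simp add: lp_dist_def)

lemma lp_dist_ge_one:
  fixes x y :: "int ^ 'n"
  assumes "1 \<le> p" "x \<noteq> y"
  shows "1 \<le> lp_dist p x y"
proof -
  obtain i where i: "x $ i \<noteq> y $ i" using assms(2) by (auto simp: vec_eq_iff)
  define c where "c = real_of_int \<bar>x $ i - y $ i\<bar>"
  have c_ge_1: "1 \<le> c" using i unfolding c_def by linarith
  show ?thesis
  proof (cases "p = \<infinity>")
    case True
    have "c \<le> Max (range (\<lambda>i. real_of_int \<bar>x $ i - y $ i\<bar>))"
      unfolding c_def by (rule Max_ge) auto
    then show ?thesis using True c_ge_1 by (simp add: lp_dist_def)
  next
    case False
    define q where "q = real_of_ereal p"
    have q_ge_1: "1 \<le> q" using assms(1) False unfolding q_def by (cases p) auto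
    have "1 \<le> c powr q" using c_ge_1 q_ge_1 by (simp add: ge_one_powr_ge_zero)
    also have "c powr q \<le> (\<Sum>i\<in>UNIV. real_of_int \<bar>x $ i - y $ i\<bar> powr q)"
      unfolding c_def by (rule member_le_sum) auto
    finally have "1 \<le> (\<Sum>i\<in>UNIV. real_of_int \<bar>x $ i - y $ i\<bar> powr q) powr (1 / q)"
      using q_ge_1 by (simp add: ge_one_powr_ge_zero)
    then show ?thesis using False by (simp add: lp_dist_def q_def)
  qed
qed

lemma funpow_in_invariant_set:
  assumes "\<forall>x\<in>X. T x \<in> X" "x \<in> X"
  shows "(T ^^ m) x \<in> X"
  using assms by (induction m) auto

lemma funpow_fixed_point: "T z = z \<Longrightarrow> (T ^^ m) z = z"
  by (induction m) auto

lemma dm_converges_eventually_const: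
  assumes "\<forall>m\<ge>N. s m = z" "d z z = 0"
  shows "dm_converges d s z"
  unfolding dm_converges_def using assms by (auto intro!: exI[of _ N])

lemma weakly_uniformly_strict_contraction_dist_less:
  assumes "weakly_uniformly_strict_contraction X d T" "x \<in> X" "y \<in> X" "0 < d x y"
  shows "d (T x) (T y) < d x y"
proof -
  obtain \<delta> where "\<delta> > 0"
    and "\<forall>u\<in>X. \<forall>v\<in>X. d x y \<le> d u v \<and> d u v < d x y + \<delta> \<longrightarrow> d (T u) (T v) < d x y"
    using assms(1,4) unfolding weakly_uniformly_strict_contraction_def by blast
  then show ?thesis using assms(2,3) by auto
qed

lemma weakly_uniformly_strict_contraction_fixed_point_unique:
  assumes "weakly_uniformly_strict_contraction X d T"
    and "\<forall>x\<in>X. \<forall>y\<in>X. x \<noteq> y \<longrightarrow> 0 < d x y"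
    and "z \<in> X" "w \<in> X" "T z = z" "T w = w"
  shows "z = w"
proof (rule ccontr)
  assume "z \<noteq> w"
  then have "d (T z) (T w) < d z w"
    using assms(2-4) by (intro weakly_uniformly_strict_contraction_dist_less[OF assms(1,3,4)]) blast
  then show False using assms(5,6) by simp
qed

lemma weakly_uniformly_strict_contraction_orbit_reaches_fixed_point:
  assumes contr: "weakly_uniformly_strict_contraction X d T"
    and maps: "\<forall>x\<in>X. T x \<in> X"
    and sep: "\<forall>x\<in>X. \<forall>y\<in>X. x \<noteq> y \<longrightarrow> c \<le> d x y" and "0 < c"
    and "x \<in> X"
  shows "\<exists>m. T ((T ^^ m) x) = (T ^^ m) x"
proof (rule ccontr)
  assume no_fixed: "\<nexists>m. T ((T ^^ m) x) = (T ^^ m) x"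
  define a where "a m = d ((T ^^ m) x) ((T ^^ Suc m) x)" for m
  have orbit: "(T ^^ m) x \<in> X" for m
    using funpow_in_invariant_set[OF maps \<open>x \<in> X\<close>] .
  have a_ge_c: "c \<le> a m" for m
    using sep orbit no_fixed unfolding a_def by (metis funpow.simps(2) o_apply)
  have bdd: "bdd_below (range a)" using a_ge_c by (intro bdd_belowI[of _ c]) auto
  define L where "L = Inf (range a)"
  have L_le: "L \<le> a m" for m unfolding L_def using bdd by (auto intro: cInf_lower)
  have "c \<le> L" unfolding L_def using a_ge_c by (auto intro: cInf_greatest)
  with \<open>0 < c\<close> have "0 < L" by simp
  then obtain \<delta> where "\<delta> > 0"
    and step: "\<forall>u\<in>X. \<forall>v\<in>X. L \<le> d u v \<and> d u v < L + \<delta> \<longrightarrow> d (T u) (T v) < L"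
    using contr unfolding weakly_uniformly_strict_contraction_def by blast
  have "\<exists>y\<in>range a. y < L + \<delta>" unfolding L_def
    by (rule cInf_lessD) (use \<open>\<delta> > 0\<close> L_def in auto)
  then obtain m where "a m < L + \<delta>" by auto
  then have "d (T ((T ^^ m) x)) (T ((T ^^ Suc m) x)) < L"
    using step orbit L_le[of m] unfolding a_def by blast
  then have "a (Suc m) < L" unfolding a_def by simp
  then show False using L_le[of "Suc m"] by simp
qed

lemma uniformly_discrete_weakly_uniformly_strict_contraction_fixed_point:
  assumes "X \<noteq> {}"
    and maps: "\<forall>x\<in>X. T x \<in> X"
    and contr: "weakly_uniformly_strict_contraction X d T"
    and sep: "\<forall>x\<in>X. \<forall>y\<in>X. x \<noteq> y \<longrightarrow> c \<le> d x y" and "0 < c"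
    and "\<forall>x\<in>X. d x x = 0"
  shows "\<exists>z\<in>X. T z = z \<and> (\<forall>w\<in>X. T w = w \<longrightarrow> w = z)
           \<and> (\<forall>x\<in>X. dm_converges d (\<lambda>m. (T ^^ m) x) z)"
proof -
  have pos: "\<forall>x\<in>X. \<forall>y\<in>X. x \<noteq> y \<longrightarrow> 0 < d x y"
  proof (intro ballI impI)
    fix x y assume "x \<in> X" "y \<in> X" "x \<noteq> y"
    then have "c \<le> d x y" using sep by blast
    with \<open>0 < c\<close> show "0 < d x y" by linarith
  qed
  note unique = weakly_uniformly_strict_contraction_fixed_point_unique[OF contr pos]
  note reaches = weakly_uniformly_strict_contraction_orbit_reaches_fixed_point[OF contr maps sep \<open>0 < c\<close>]
  note orbit = funpow_in_invariant_set[OF maps]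
  obtain x0 where "x0 \<in> X" using \<open>X \<noteq> {}\<close> by blast
  then obtain m0 where fixed: "T ((T ^^ m0) x0) = (T ^^ m0) x0" using reaches by blast
  define z where "z = (T ^^ m0) x0"
  have "z \<in> X" unfolding z_def using orbit \<open>x0 \<in> X\<close> .
  have "T z = z" unfolding z_def using fixed .
  have "w = z" if "w \<in> X" "T w = w" for w
    using unique[OF \<open>w \<in> X\<close> \<open>z \<in> X\<close> \<open>T w = w\<close> \<open>T z = z\<close>] .
  moreover have "dm_converges d (\<lambda>m. (T ^^ m) x) z" if "x \<in> X" for x
  proof -
    obtain N where "T ((T ^^ N) x) = (T ^^ N) x" using reaches \<open>x \<in> X\<close> by blast
    then have "(T ^^ N) x = z" by (rule unique[OF orbit[OF \<open>x \<in> X\<close>] \<open>z \<in> X\<close> _ \<open>T z = z\<close>])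
    have "\<forall>m\<ge>N. (T ^^ m) x = z"
    proof (intro allI impI)
      fix m assume "N \<le> m"
      then obtain k where "m = k + N" using le_Suc_ex add.commute by metis
      then show "(T ^^ m) x = z"
        using \<open>(T ^^ N) x = z\<close> funpow_fixed_point[of T z] \<open>T z = z\<close> by (simp add: funpow_add)
    qed
    moreover have "d z z = 0" using \<open>z \<in> X\<close> assms(6) by blast
    ultimately show ?thesis by (rule dm_converges_eventually_const)
  qed
  ultimately show ?thesis using \<open>z \<in> X\<close> \<open>T z = z\<close> by (intro bexI[of _ z] conjI ballI impI)
qed

theorem theorem8p9:
  fixes X :: "(int ^ 'n) set" and p :: ereal and T :: "int ^ 'n \<Rightarrow> int ^ 'n"
    and \<kappa> :: "int ^ 'n \<Rightarrow> int ^ 'n \<Rightarrow> bool"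
  assumes "X \<noteq> {}"
    and "1 \<le> p"
    and "dm_complete X (lp_dist p)"
    and "\<forall>x\<in>X. T x \<in> X"
    and "weakly_uniformly_strict_contraction X (lp_dist p) T"
  shows "\<exists>z\<in>X. T z = z \<and> (\<forall>w\<in>X. T w = w \<longrightarrow> w = z)
           \<and> (\<forall>x\<in>X. dm_converges (lp_dist p) (\<lambda>m. (T ^^ m) x) z)"
proof -
  have "\<forall>x\<in>X. \<forall>y\<in>X. x \<noteq> y \<longrightarrow> 1 \<le> lp_dist p x y"
    using lp_dist_ge_one[OF assms(2)] by blast
  from uniformly_discrete_weakly_uniformly_strict_contraction_fixed_point[OF assms(1,4,5) this]
  show ?thesis by (simp add: lp_dist_self)
qed

end
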